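(* Let $0<\mu\le L$, $C>0$, and $0<\gamma<1$. Let $f_1,f_2,\dots:\mathbb{R}^d\to\mathbb{R}$ be differentiable functions, each $L$-smooth and $\mu$-strongly convex, whose minimizers $\mathbf{w}^*_t=\arg\min_{\mathbf{w}} f_t(\mathbf{w})$ satisfy $\|\mathbf{w}^*_t\|\le C$ for all $t\ge1$. Define $F_t(\mathbf{w})=\sum_{i=1}^t \frac{1-\gamma}{1-\gamma^t}\gamma^{t-i}f_i(\mathbf{w})$ and $\overline{\mathbf{w}}^*_t=\arg\min_{\mathbf{w}}F_t(\mathbf{w})$. Let $\eta$ satisfy $0<\eta\le\frac{2}{\mu+L}$ and $\eta\mu<1$, and let $E\ge1$ be an integer. Starting from arbitrary $\mathbf{w}_0\in\mathbb{R}^d$, for each $t\ge0$ set $\mathbf{w}_{t,0}=\mathbf{w}_t$, $\mathbf{w}_{t,k+1}=\mathbf{w}_{t,k}-\eta\nabla F_{t+1}(\mathbf{w}_{t,k})$ for $k=0,\dots,E-1$, and $\mathbf{w}_{t+1}=\mathbf{w}_{t,E}$. Let $C'=\left(1+\sqrt{L/\mu}\right)\frac{LC}{\mu}$ and let $\epsilon>0$. If $$E\ge\frac{\ln\left(\frac{\epsilon}{C'(1-\gamma)+\epsilon}\right)}{\ln(1-\eta\mu)},$$ then $\limsup_{t\to\infty}\|\mathbf{w}_t-\overline{\mathbf{w}}^*_t\|\le\epsilon$. Consequently, the number of gradient updates per time step needed to achieve asymptotic tracking error at most $\epsilon$ is $\mathcal{O}(\ln(1/\epsilon))$ as $\ep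silon\to0$.
   Context: A function $f$ is $L$-smooth if $\|\nabla f(\mathbf{x})-\nabla f(\mathbf{y})\|\le L\|\mathbf{x}-\mathbf{y}\|$ for all $\mathbf{x},\mathbf{y}$, and $\mu$-strongly convex if $f(\mathbf{y})\ge f(\mathbf{x})+\nabla f(\mathbf{x})^\top(\mathbf{y}-\mathbf{x})+\frac{\mu}{2}\|\mathbf{y}-\mathbf{x}\|^2$ for all $\mathbf{x},\mathbf{y}$. The quantity $\limsup_{t\to\infty}\|\mathbf{w}_t-\overline{\mathbf{w}}^*_t\|$ is called the asymptotic tracking error. *)

theory Defs
  imports "HOL-Analysis.Analysis" "HOL-Library.Landau_Symbols"
begin

definition smooth_grad :: "real \<Rightarrow> ('a::euclidean_space \<Rightarrow> 'a) \<Rightarrow> bool" where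
  "smooth_grad L g \<longleftrightarrow> (\<forall>x y. norm (g x - g y) \<le> L * norm (x - y))"

definition strongly_convex_grad ::
  "real \<Rightarrow> ('a::euclidean_space \<Rightarrow> real) \<Rightarrow> ('a \<Rightarrow> 'a) \<Rightarrow> bool" where
  "strongly_convex_grad \<mu> f g \<longleftrightarrow>
     (\<forall>x y. f y \<ge> f x + inner (g x) (y - x) + \<mu> / 2 * (norm (y - x))^2)"

definition Fdisc :: "real \<Rightarrow> (nat \<Rightarrow> 'a \<Rightarrow> real) \<Rightarrow> nat \<Rightarrow> 'a \<Rightarrow> real" where
  "Fdisc \<gamma> f t w = (\<Sum>i=1..t. (1 - \<gamma>) / (1 - \<gamma>^t) * \<gamma>^(t - i) * f i w)"

definition gradF :: "real \<Rightarrow> (nat \<Rightarrow> 'a \<Rightarrow> 'a::real_vector) \<Rightarrow> nat \<Rightarrow> 'a \<Rightarrow> 'a" where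
  "gradF \<gamma> g t w = (\<Sum>i=1..t. ((1 - \<gamma>) / (1 - \<gamma>^t) * \<gamma>^(t - i)) *\<^sub>R g i w)"

text \<open>The argmin of a function (used only where it is unique).\<close>
definition argmin :: "('a \<Rightarrow> real) \<Rightarrow> 'a" where
  "argmin h = (THE w. \<forall>v. h w \<le> h v)"

primrec iter_w :: "real \<Rightarrow> (nat \<Rightarrow> 'a \<Rightarrow> 'a::real_vector) \<Rightarrow> real \<Rightarrow> nat \<Rightarrow> 'a \<Rightarrow> nat \<Rightarrow> 'a" where
  "iter_w \<gamma> g \<eta> E w0 0 = w0"
| "iter_w \<gamma> g \<eta> E w0 (Suc t) =
     ((\<lambda>x. x - \<eta> *\<^sub>R gradF \<gamma> g (Suc t) x) ^^ E) (iter_w \<gamma> g \<eta> E w0 t)"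

end

theory Submission
  imports Defs "HOL-Real_Asymp.Real_Asymp"
begin

text \<open>Every \<open>f\<^sub>t\<close>, and hence every discounted average \<open>F\<^sub>t\<close>, lies between the
  quadratics \<open>\<mu>/2 \<parallel>y - x\<parallel>\<^sup>2\<close> and \<open>L/2 \<parallel>y - x\<parallel>\<^sup>2\<close> above its tangent planes. For such a
  function a gradient step with \<open>\<eta> \<le> 2/(\<mu> + L)\<close> is a \<open>(1 - \<eta>\<mu>)\<close>-contraction towards its
  unique minimizer, so the \<open>E\<close> steps of one round shrink the distance to the new minimizer by
  \<open>\<rho> = (1 - \<eta>\<mu>)\<^sup>E\<close>. The minimizer itself moves little: the gradient of \<open>F\<^sub>t\<^sub>+\<^sub>1\<close> at the
  minimizer of \<open>F\<^sub>t\<close> is just the new term \<open>\<nabla>f\<^sub>t\<^sub>+\<^sub>1\<close> with weight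
  \<open>\<alpha>\<^sub>t = (1 - \<gamma>)/(1 - \<gamma>\<^sup>t\<^sup>+\<^sup>1)\<close>, and since all minimizers have norm at most
  \<open>\<surd>(L/\<mu>) C\<close>, strong monotonicity moves the minimizer by at most \<open>\<alpha>\<^sub>t C'\<close>. Hence the
  tracking error obeys \<open>e\<^sub>t\<^sub>+\<^sub>1 \<le> \<rho> (e\<^sub>t + \<alpha>\<^sub>t C')\<close> with \<open>\<alpha>\<^sub>t \<rightarrow> 1 - \<gamma>\<close>, so its limsup is
  at most \<open>\<rho> (1 - \<gamma>) C' / (1 - \<rho>)\<close>, which the bound on \<open>E\<close> makes at most \<open>\<epsilon>\<close>.\<close>

section \<open>Functions between two quadratics\<close>

definition quadratic_bounds :: "real \<Rightarrow> real \<Rightarrow> ('a::real_inner \<Rightarrow> real) \<Rightarrow> ('a \<Rightarrow> 'a) \<Rightarrow> bool" where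
  "quadratic_bounds \<mu> L F G \<longleftrightarrow>
     (\<forall>x y. \<mu>/2 * (norm (y - x))\<^sup>2 \<le> F y - F x - inner (G x) (y - x)
          \<and> F y - F x - inner (G x) (y - x) \<le> L/2 * (norm (y - x))\<^sup>2)"

lemma smooth_grad_descent:
  fixes F :: "'a::euclidean_space \<Rightarrow> real"
  assumes deriv: "\<And>x. (F has_derivative (\<lambda>h. inner (G x) h)) (at x)" and smooth: "smooth_grad L G"
  shows "F y - F x - inner (G x) (y - x) \<le> L/2 * (norm (y - x))\<^sup>2"
proof -
  define d where "d = y - x"
  define h where "h s = F (x + s *\<^sub>R d) - s * inner (G x) d - L/2 * s\<^sup>2 * (norm d)\<^sup>2" for s
  have F_line: "((\<lambda>s. F (x + s *\<^sub>R d)) has_real_derivative inner (G (x + s *\<^sub>R d)) d) (at s)" for s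
  proof -
    have "((\<lambda>s. x + s *\<^sub>R d) has_derivative (\<lambda>u. u *\<^sub>R d)) (at s)"
      by (auto intro!: derivative_eq_intros)
    from has_derivative_compose[OF this deriv] show ?thesis
      by (simp add: has_field_derivative_def mult_commute_abs)
  qed
  have h_deriv: "(h has_real_derivative
      inner (G (x + s *\<^sub>R d) - G x) d - L * s * (norm d)\<^sup>2) (at s)" for s
    unfolding h_def inner_diff_left by (rule derivative_eq_intros F_line | simp)+
  have h_deriv_nonpos: "inner (G (x + s *\<^sub>R d) - G x) d - L * s * (norm d)\<^sup>2 \<le> 0" if "0 \<le> s" for s
  proof -
    have "inner (G (x + s *\<^sub>R d) - G x) d \<le> norm (G (x + s *\<^sub>R d) - G x) * norm d"
      by (rule norm_cauchy_schwarz)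
    also have "\<dots> \<le> L * norm (s *\<^sub>R d) * norm d"
      using smooth unfolding smooth_grad_def by (metis add_diff_cancel_left' mult_right_mono norm_ge_zero)
    also have "\<dots> = L * s * (norm d)\<^sup>2"
      using that by (simp add: power2_eq_square)
    finally show ?thesis by simp
  qed
  have "h 1 \<le> h 0"
  proof (rule DERIV_nonpos_imp_nonincreasing[of 0 1 h])
    fix s :: real
    assume "0 \<le> s" "s \<le> 1"
    with h_deriv h_deriv_nonpos show "\<exists>D. (h has_real_derivative D) (at s) \<and> D \<le> 0"
      by blast
  qed simp
  then show ?thesis unfolding h_def d_def by simp
qed

lemma quadratic_bounds_if_smooth_strongly_convex:
  fixes F :: "'a::euclidean_space \<Rightarrow> real"
  assumes "\<And>x. (F has_derivative (\<lambda>h. inner (G x) h)) (at x)"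
    and "smooth_grad L G" and "strongly_convex_grad \<mu> F G"
  shows "quadratic_bounds \<mu> L F G"
  using assms smooth_grad_descent unfolding quadratic_bounds_def strongly_convex_grad_def
  by (fastforce simp: algebra_simps)

lemma quadratic_bounds_convex_combination:
  assumes "\<And>i. i \<in> I \<Longrightarrow> 0 \<le> c i" and "(\<Sum>i\<in>I. c i) = 1"
    and "\<And>i. i \<in> I \<Longrightarrow> quadratic_bounds \<mu> L (f i) (g i)"
  shows "quadratic_bounds \<mu> L (\<lambda>w. \<Sum>i\<in>I. c i * f i w) (\<lambda>w. \<Sum>i\<in>I. c i *\<^sub>R g i w)"
  unfolding quadratic_bounds_def
proof (intro allI conjI)
  fix x y
  define B where "B i = f i y - f i x - inner (g i x) (y - x)" for i
  have B_sum: "(\<Sum>i\<in>I. c i * f i y) - (\<Sum>i\<in>I. c i * f i x) - inner (\<Sum>i\<in>I. c i *\<^sub>R g i x) (y - x)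
      = (\<Sum>i\<in>I. c i * B i)"
    by (simp add: B_def inner_sum_left sum_subtractf[symmetric] algebra_simps)
  have const: "(\<Sum>i\<in>I. c i * a) = a" for a
    by (simp add: assms(2) flip: sum_distrib_right)
  have "\<mu>/2 * (norm (y - x))\<^sup>2 = (\<Sum>i\<in>I. c i * (\<mu>/2 * (norm (y - x))\<^sup>2))"
    by (rule const[symmetric])
  also have "\<dots> \<le> (\<Sum>i\<in>I. c i * B i)"
    using assms(1,3) by (intro sum_mono mult_left_mono) (auto simp: quadratic_bounds_def B_def)
  finally show "\<mu>/2 * (norm (y - x))\<^sup>2 \<le> (\<Sum>i\<in>I. c i * f i y) - (\<Sum>i\<in>I. c i * f i x)
      - inner (\<Sum>i\<in>I. c i *\<^sub>R g i x) (y - x)"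
    unfolding B_sum .
  have "(\<Sum>i\<in>I. c i * B i) \<le> (\<Sum>i\<in>I. c i * (L/2 * (norm (y - x))\<^sup>2))"
    using assms(1,3) by (intro sum_mono mult_left_mono) (auto simp: quadratic_bounds_def B_def)
  then show "(\<Sum>i\<in>I. c i * f i y) - (\<Sum>i\<in>I. c i * f i x)
      - inner (\<Sum>i\<in>I. c i *\<^sub>R g i x) (y - x) \<le> L/2 * (norm (y - x))\<^sup>2"
    unfolding B_sum const .
qed

lemma quadratic_bounds_strongly_monotone:
  assumes "quadratic_bounds \<mu> L F G"
  shows "\<mu> * (norm (y - x))\<^sup>2 \<le> inner (G y - G x) (y - x)"
proof -
  have "\<mu>/2 * (norm (y - x))\<^sup>2 \<le> F y - F x - inner (G x) (y - x)"
    and "\<mu>/2 * (norm (x - y))\<^sup>2 \<le> F x - F y - inner (G y) (x - y)"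
    using assms unfolding quadratic_bounds_def by blast+
  then show ?thesis
    by (simp add: norm_minus_commute inner_diff_left inner_diff_right)
qed

lemma quadratic_bounds_grad_diff_ge:
  assumes "quadratic_bounds \<mu> L F G"
  shows "\<mu> * norm (y - x) \<le> norm (G y - G x)"
proof (cases "y = x")
  case False
  have "\<mu> * (norm (y - x))\<^sup>2 \<le> inner (G y - G x) (y - x)"
    by (rule quadratic_bounds_strongly_monotone[OF assms])
  also have "\<dots> \<le> norm (G y - G x) * norm (y - x)"
    by (rule norm_cauchy_schwarz)
  finally show ?thesis
    using False by (simp add: power2_eq_square)
qed simp

lemma quadratic_bounds_shift:
  assumes "quadratic_bounds \<mu> L F G"
  shows "quadratic_bounds 0 (L - \<mu>) (\<lambda>x. F x - \<mu>/2 * (norm x)\<^sup>2) (\<lambda>x. G x - \<mu> *\<^sub>R x)"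
proof -
  have shifted: "F y - \<mu>/2 * (norm y)\<^sup>2 - (F x - \<mu>/2 * (norm x)\<^sup>2) - inner (G x - \<mu> *\<^sub>R x) (y - x)
      = F y - F x - inner (G x) (y - x) - \<mu>/2 * (norm (y - x))\<^sup>2" for x y
    by (simp add: power2_norm_eq_inner inner_diff_left inner_diff_right inner_commute algebra_simps)
  show ?thesis
    using assms unfolding quadratic_bounds_def shifted by (simp add: left_diff_distrib diff_divide_distrib algebra_simps)
qed

lemma quadratic_bounds_remainder_ge:
  assumes "quadratic_bounds 0 M F G"
  shows "(r - M * r\<^sup>2 / 2) * (norm (G b - G a))\<^sup>2 \<le> F b - F a - inner (G a) (b - a)"
proof -
  define R where "R x y = F y - F x - inner (G x) (y - x)" for x y
  define v where "v = G b - G a"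
  (* the lower bound is used at (a, c) and the upper bound at (b, c) *)
  define c where "c = b - r *\<^sub>R v"
  have three_point: "R a b = R a c - R b c + r * (norm v)\<^sup>2"
    by (simp add: R_def c_def v_def inner_diff_left inner_diff_right power2_norm_eq_inner algebra_simps)
  have "0 \<le> R a c" and "R b c \<le> M/2 * (norm (c - b))\<^sup>2"
    using assms unfolding quadratic_bounds_def R_def by auto
  moreover have "(norm (c - b))\<^sup>2 = r\<^sup>2 * (norm v)\<^sup>2"
    by (simp add: c_def power_mult_distrib)
  ultimately show ?thesis
    using three_point unfolding R_def v_def by (simp add: algebra_simps)
qed

lemma quadratic_bounds_cocoercive_convex:
  assumes "quadratic_bounds 0 M F G"
  shows "(norm (G y - G x))\<^sup>2 \<le> M * inner (G y - G x) (y - x)"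
proof -
  define v where "v = G y - G x"
  have remainder_sum: "inner v (y - x)
      = (F y - F x - inner (G x) (y - x)) + (F x - F y - inner (G y) (x - y))"
    by (simp add: v_def inner_diff_left inner_diff_right)
  have lower: "(2 * r - M * r\<^sup>2) * (norm v)\<^sup>2 \<le> inner v (y - x)" for r
    using quadratic_bounds_remainder_ge[OF assms, of r x y] quadratic_bounds_remainder_ge[OF assms, of r y x]
    unfolding remainder_sum v_def by (simp add: norm_minus_commute algebra_simps)
  show ?thesis
  proof (cases "M > 0")
    case True
    with lower[of "1 / M"] show ?thesis
      by (simp add: v_def power2_eq_square field_simps)
  next
    case False
    have "F y - F x - inner (G x) (y - x) \<le> M/2 * (norm (y - x))\<^sup>2"
      and "F x - F y - inner (G y) (x - y) \<le> M/2 * (norm (y - x))\<^sup>2"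
      using assms unfolding quadratic_bounds_def by (metis norm_minus_commute)+
    then have "inner v (y - x) \<le> M * (norm (y - x))\<^sup>2"
      unfolding remainder_sum by linarith
    also have "\<dots> \<le> 0"
      using False by (simp add: mult_nonpos_nonneg)
    finally have "(2 - M) * (norm v)\<^sup>2 \<le> 0"
      using lower[of 1] by simp
    with False have "v = 0"
      by (simp add: mult_le_0_iff)
    then show ?thesis by (simp add: v_def)
  qed
qed

lemma quadratic_bounds_cocoercive:
  assumes "quadratic_bounds \<mu> L F G"
  shows "(norm (G y - G x))\<^sup>2 + \<mu> * L * (norm (y - x))\<^sup>2 \<le> (L + \<mu>) * inner (G y - G x) (y - x)"
proof -
  define u where "u = G y - G x"
  define d where "d = y - x"
  have "(norm (u - \<mu> *\<^sub>R d))\<^sup>2 \<le> (L - \<mu>) * inner (u - \<mu> *\<^sub>R d) d"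
    using quadratic_bounds_cocoercive_convex[OF quadratic_bounds_shift[OF assms], of y x]
    by (simp add: u_def d_def algebra_simps)
  then show ?thesis
    unfolding u_def [symmetric] d_def [symmetric] power2_norm_eq_inner
    by (simp add: inner_diff_left inner_diff_right inner_commute algebra_simps power2_eq_square)
qed

lemma step_size_le:
  fixes \<mu> L \<eta> :: real
  assumes "0 < \<mu>" "\<mu> \<le> L" "0 < \<eta>" "\<eta> \<le> 2 / (\<mu> + L)"
  shows "\<eta> * \<mu> \<le> 1"
proof -
  have "\<eta> * (2 * \<mu>) \<le> \<eta> * (\<mu> + L)"
    using assms by simp
  also have "\<dots> \<le> 2"
    using assms by (simp add: field_simps)
  finally show ?thesis by simp
qed

lemma gradient_step_contraction:
  assumes Q: "quadratic_bounds \<mu> L F G" and "0 < \<mu>" "\<mu> \<le> L" "0 < \<eta>" "\<eta> \<le> 2 / (\<mu> + L)"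
  shows "norm ((y - \<eta> *\<^sub>R G y) - (x - \<eta> *\<^sub>R G x)) \<le> (1 - \<eta> * \<mu>) * norm (y - x)"
proof -
  define u where "u = G y - G x"
  define d where "d = y - x"
  have step_diff: "(y - \<eta> *\<^sub>R G y) - (x - \<eta> *\<^sub>R G x) = d - \<eta> *\<^sub>R u"
    by (simp add: u_def d_def algebra_simps)
  have expand: "(norm (d - \<eta> *\<^sub>R u))\<^sup>2 = (norm d)\<^sup>2 - 2 * \<eta> * inner u d + \<eta>\<^sup>2 * (norm u)\<^sup>2"
    unfolding power2_norm_eq_inner
    by (simp add: inner_diff_left inner_diff_right inner_commute algebra_simps power2_eq_square)
  have cocoercive: "(norm u)\<^sup>2 + \<mu> * L * (norm d)\<^sup>2 \<le> (L + \<mu>) * inner u d"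
    using quadratic_bounds_cocoercive[OF Q] by (simp add: u_def d_def)
  have "\<mu> * norm d \<le> norm u"
    using quadratic_bounds_grad_diff_ge[OF Q] by (simp add: u_def d_def)
  then have grad_lower: "\<mu>\<^sup>2 * (norm d)\<^sup>2 \<le> (norm u)\<^sup>2"
    using \<open>0 < \<mu>\<close> by (metis power_mono power_mult_distrib mult_nonneg_nonneg norm_ge_zero less_imp_le)
  have LM: "0 < L + \<mu>" and slack: "0 \<le> 2 - \<eta> * (L + \<mu>)"
    using assms(2-5) by (auto simp: field_simps)
  have "(L + \<mu>) * (norm (d - \<eta> *\<^sub>R u))\<^sup>2
      = (L + \<mu>) * (norm d)\<^sup>2 - 2 * \<eta> * ((L + \<mu>) * inner u d) + \<eta>\<^sup>2 * (L + \<mu>) * (norm u)\<^sup>2"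
    unfolding expand by (simp add: algebra_simps)
  also have "\<dots> \<le> (L + \<mu>) * (norm d)\<^sup>2 - 2 * \<eta> * ((norm u)\<^sup>2 + \<mu> * L * (norm d)\<^sup>2)
      + \<eta>\<^sup>2 * (L + \<mu>) * (norm u)\<^sup>2"
    using cocoercive \<open>0 < \<eta>\<close> by simp
  also have "\<dots> = (L + \<mu>) * (norm d)\<^sup>2 - 2 * \<eta> * \<mu> * L * (norm d)\<^sup>2
      - \<eta> * (2 - \<eta> * (L + \<mu>)) * (norm u)\<^sup>2"
    by (simp add: algebra_simps power2_eq_square)
  also have "\<dots> \<le> (L + \<mu>) * (norm d)\<^sup>2 - 2 * \<eta> * \<mu> * L * (norm d)\<^sup>2
      - \<eta> * (2 - \<eta> * (L + \<mu>)) * (\<mu>\<^sup>2 * (norm d)\<^sup>2)"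
    using grad_lower slack \<open>0 < \<eta>\<close> by (simp add: mult_left_mono)
  also have "\<dots> = (L + \<mu>) * ((1 - \<eta> * \<mu>) * norm d)\<^sup>2"
    by (simp add: algebra_simps power2_eq_square)
  finally have "(norm (d - \<eta> *\<^sub>R u))\<^sup>2 \<le> ((1 - \<eta> * \<mu>) * norm d)\<^sup>2"
    using LM by simp
  moreover have "0 \<le> (1 - \<eta> * \<mu>) * norm d"
    using step_size_le[OF assms(2-5)] by simp
  ultimately show ?thesis
    unfolding step_diff d_def by (rule power2_le_imp_le)
qed

lemma gradient_steps_contraction:
  assumes "quadratic_bounds \<mu> L F G" "0 < \<mu>" "\<mu> \<le> L" "0 < \<eta>" "\<eta> \<le> 2 / (\<mu> + L)"
    and "G m = 0"
  shows "norm (((\<lambda>x. x - \<eta> *\<^sub>R G x) ^^ n) w - m) \<le> (1 - \<eta> * \<mu>) ^ n * norm (w - m)"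
proof (induction n)
  case 0
  then show ?case by simp
next
  case (Suc n)
  define y where "y = ((\<lambda>x. x - \<eta> *\<^sub>R G x) ^^ n) w"
  have "norm (((\<lambda>x. x - \<eta> *\<^sub>R G x) ^^ Suc n) w - m) = norm ((y - \<eta> *\<^sub>R G y) - (m - \<eta> *\<^sub>R G m))"
    using \<open>G m = 0\<close> by (simp add: y_def)
  also have "\<dots> \<le> (1 - \<eta> * \<mu>) * norm (y - m)"
    using gradient_step_contraction assms(1-5) by blast
  also have "\<dots> \<le> (1 - \<eta> * \<mu>) * ((1 - \<eta> * \<mu>) ^ n * norm (w - m))"
    using Suc.IH step_size_le[OF assms(2-5)] unfolding y_def
    by (intro mult_left_mono) auto
  finally show ?case by simp
qed

lemma quadratic_bounds_zero_exists:
  fixes G :: "'a::{real_inner, complete_space} \<Rightarrow> 'a"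
  assumes "quadratic_bounds \<mu> L F G" "0 < \<mu>" "\<mu> \<le> L"
  shows "\<exists>m. G m = 0"
proof -
  define \<eta> where "\<eta> = 1 / (\<mu> + L)"
  have \<eta>: "0 < \<eta>" "\<eta> \<le> 2 / (\<mu> + L)" "\<eta> * \<mu> < 1"
    using assms(2,3) by (auto simp: \<eta>_def field_simps)
  have "\<exists>!x. x - \<eta> *\<^sub>R G x = x"
    using gradient_step_contraction[OF assms \<eta>(1,2)] \<eta> assms(2)
    by (intro banach_fix_type[of "1 - \<eta> * \<mu>"]) (auto simp: dist_norm)
  then show ?thesis
    using \<eta>(1) by auto
qed

lemma quadratic_bounds_min_at_zero:
  assumes "quadratic_bounds \<mu> L F G" "0 \<le> \<mu>" "G m = 0"
  shows "F m \<le> F v"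
proof -
  have "\<mu>/2 * (norm (v - m))\<^sup>2 \<le> F v - F m"
    using assms(1,3) unfolding quadratic_bounds_def by (metis diff_zero inner_zero_left)
  moreover have "0 \<le> \<mu>/2 * (norm (v - m))\<^sup>2"
    using assms(2) by simp
  ultimately show ?thesis by simp
qed

lemma quadratic_bounds_argmin:
  assumes "quadratic_bounds \<mu> L F G" "0 < \<mu>" "G m = 0"
  shows "argmin F = m"
  unfolding argmin_def
proof (rule the_equality)
  show "\<forall>v. F m \<le> F v"
    using quadratic_bounds_min_at_zero assms by (blast intro: less_imp_le)
  fix w
  assume "\<forall>v. F w \<le> F v"
  then have "F w \<le> F m" by blast
  moreover have "\<mu>/2 * (norm (w - m))\<^sup>2 \<le> F w - F m"
    using assms(1,3) unfolding quadratic_bounds_def by (metis diff_zero inner_zero_left)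
  ultimately have "\<mu> * (norm (w - m))\<^sup>2 \<le> 0"
    by simp
  with assms(2) show "w = m"
    by (simp add: mult_le_0_iff)
qed

section \<open>Minimizers of convex combinations\<close>

lemma weighted_sum_norm_diff_sq:
  fixes z :: "'i \<Rightarrow> 'a::real_inner"
  assumes "(\<Sum>i\<in>I. c i) = 1"
  shows "(\<Sum>i\<in>I. c i * (norm (w - z i))\<^sup>2)
    = (norm w)\<^sup>2 - 2 * inner w (\<Sum>i\<in>I. c i *\<^sub>R z i) + (\<Sum>i\<in>I. c i * (norm (z i))\<^sup>2)"
proof -
  have expand: "(norm (w - z i))\<^sup>2 = (norm w)\<^sup>2 - 2 * inner w (z i) + (norm (z i))\<^sup>2" for i
    unfolding power2_norm_eq_inner by (simp add: inner_diff_left inner_diff_right inner_commute)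
  have "(\<Sum>i\<in>I. c i * (norm (w - z i))\<^sup>2)
      = (\<Sum>i\<in>I. c i * (norm w)\<^sup>2 - 2 * (c i * inner w (z i)) + c i * (norm (z i))\<^sup>2)"
    unfolding expand by (simp add: algebra_simps)
  also have "\<dots> = (\<Sum>i\<in>I. c i) * (norm w)\<^sup>2 - 2 * (\<Sum>i\<in>I. c i * inner w (z i))
      + (\<Sum>i\<in>I. c i * (norm (z i))\<^sup>2)"
    by (simp add: sum.distrib sum_subtractf sum_distrib_left sum_distrib_right)
  finally show ?thesis
    by (simp add: assms inner_sum_right)
qed

lemma convex_combination_minimizer_le:
  assumes "\<And>i. i \<in> I \<Longrightarrow> 0 \<le> c i" and "(\<Sum>i\<in>I. c i) = 1"
    and "\<And>i. i \<in> I \<Longrightarrow> quadratic_bounds \<mu> L (f i) (g i)"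
    and "\<And>i. i \<in> I \<Longrightarrow> g i (z i) = 0"
    and "\<And>v. (\<Sum>i\<in>I. c i * f i m) \<le> (\<Sum>i\<in>I. c i * f i v)"
  shows "\<mu> * (\<Sum>i\<in>I. c i * (norm (m - z i))\<^sup>2) \<le> L * (\<Sum>i\<in>I. c i * (norm (w - z i))\<^sup>2)"
proof -
  have lower: "\<mu>/2 * (norm (m - z i))\<^sup>2 \<le> f i m - f i (z i)"
    and upper: "f i w - f i (z i) \<le> L/2 * (norm (w - z i))\<^sup>2" if "i \<in> I" for i
    using assms(3,4)[OF that] unfolding quadratic_bounds_def by (metis diff_zero inner_zero_left)+
  have "\<mu>/2 * (\<Sum>i\<in>I. c i * (norm (m - z i))\<^sup>2) = (\<Sum>i\<in>I. c i * (\<mu>/2 * (norm (m - z i))\<^sup>2))"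
    by (simp add: sum_distrib_left algebra_simps)
  also have "\<dots> \<le> (\<Sum>i\<in>I. c i * (f i m - f i (z i)))"
    using assms(1) lower by (intro sum_mono mult_left_mono) auto
  also have "\<dots> \<le> (\<Sum>i\<in>I. c i * (f i w - f i (z i)))"
    using assms(5)[of w] by (simp add: right_diff_distrib sum_subtractf)
  also have "\<dots> \<le> (\<Sum>i\<in>I. c i * (L/2 * (norm (w - z i))\<^sup>2))"
    using assms(1) upper by (intro sum_mono mult_left_mono) auto
  also have "\<dots> = L/2 * (\<Sum>i\<in>I. c i * (norm (w - z i))\<^sup>2)"
    by (simp add: sum_distrib_left algebra_simps)
  finally show ?thesis by simp
qed

lemma norm_sq_le_if_dist_sq_le:
  fixes m z :: "'a::real_inner"
  assumes "0 < \<mu>" "\<mu> \<le> L" "norm z \<le> C"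
    and "\<mu> * (norm (m - z))\<^sup>2 \<le> (L - \<mu>) * (C\<^sup>2 - (norm z)\<^sup>2)"
  shows "\<mu> * (norm m)\<^sup>2 \<le> L * C\<^sup>2"
proof -
  define a where "a = norm m"
  define r where "r = norm z"
  have "a\<^sup>2 - 2 * a * r + r\<^sup>2 \<le> (norm (m - z))\<^sup>2"
    using norm_cauchy_schwarz[of m z] unfolding a_def r_def power2_norm_eq_inner
    by (simp add: inner_diff_left inner_diff_right inner_commute)
  with assms(1) have "\<mu> * (a\<^sup>2 - 2 * a * r + r\<^sup>2) \<le> \<mu> * (norm (m - z))\<^sup>2"
    by simp
  with assms(4) have "\<mu> * (a\<^sup>2 - 2 * a * r + r\<^sup>2) \<le> (L - \<mu>) * (C\<^sup>2 - r\<^sup>2)"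
    unfolding r_def by linarith
  then have key: "\<mu> * a\<^sup>2 - 2 * \<mu> * a * r + L * r\<^sup>2 \<le> (L - \<mu>) * C\<^sup>2"
    by (simp add: algebra_simps)
  show ?thesis
  proof (cases "L = \<mu>")
    case True
    with key have "\<mu> * (a - r)\<^sup>2 \<le> 0"
      by (simp add: power2_eq_square algebra_simps)
    with assms(1) have "a = r"
      by (simp add: mult_le_0_iff)
    with assms(3) have "a\<^sup>2 \<le> C\<^sup>2"
      unfolding a_def r_def by (simp add: power_mono)
    with True assms(1) show ?thesis
      unfolding a_def by simp
  next
    case False
    with assms(2) have "0 < L - \<mu>" by simp
    have "L * (\<mu> * a\<^sup>2 - 2 * \<mu> * a * r + L * r\<^sup>2) = (L - \<mu>) * (\<mu> * a\<^sup>2) + (\<mu> * a - L * r)\<^sup>2"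
      by (simp add: power2_eq_square algebra_simps)
    moreover have "L * (\<mu> * a\<^sup>2 - 2 * \<mu> * a * r + L * r\<^sup>2) \<le> L * ((L - \<mu>) * C\<^sup>2)"
      using key assms(1,2) by (simp add: mult_left_mono)
    moreover have "0 \<le> (\<mu> * a - L * r)\<^sup>2"
      by (rule zero_le_power2)
    ultimately have "(L - \<mu>) * (\<mu> * a\<^sup>2) \<le> L * ((L - \<mu>) * C\<^sup>2)"
      by linarith
    then have "(L - \<mu>) * (\<mu> * a\<^sup>2) \<le> (L - \<mu>) * (L * C\<^sup>2)"
      by (simp add: mult.left_commute)
    with \<open>0 < L - \<mu>\<close> show ?thesis
      unfolding a_def by simp
  qed
qed

lemma convex_combination_minimizer_norm:
  assumes "\<And>i. i \<in> I \<Longrightarrow> 0 \<le> c i" and "(\<Sum>i\<in>I. c i) = 1"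
    and "\<And>i. i \<in> I \<Longrightarrow> quadratic_bounds \<mu> L (f i) (g i)"
    and "\<And>i. i \<in> I \<Longrightarrow> g i (z i) = 0" and "\<And>i. i \<in> I \<Longrightarrow> norm (z i) \<le> C"
    and "\<And>v. (\<Sum>i\<in>I. c i * f i m) \<le> (\<Sum>i\<in>I. c i * f i v)"
    and "0 < \<mu>" "\<mu> \<le> L"
  shows "\<mu> * (norm m)\<^sup>2 \<le> L * C\<^sup>2"
proof -
  define z' where "z' = (\<Sum>i\<in>I. c i *\<^sub>R z i)"
  define S where "S = (\<Sum>i\<in>I. c i * (norm (z i))\<^sup>2)"
  have "\<mu> * ((norm m)\<^sup>2 - 2 * inner m z' + S) \<le> L * ((norm z')\<^sup>2 - 2 * inner z' z' + S)"
    using convex_combination_minimizer_le[OF assms(1-4,6), of z'] 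
    unfolding weighted_sum_norm_diff_sq[OF assms(2)] z'_def S_def .
  moreover have "(norm m)\<^sup>2 - 2 * inner m z' = (norm (m - z'))\<^sup>2 - (norm z')\<^sup>2"
    unfolding power2_norm_eq_inner by (simp add: inner_diff_left inner_diff_right inner_commute)
  ultimately have "\<mu> * (norm (m - z'))\<^sup>2 \<le> (L - \<mu>) * (S - (norm z')\<^sup>2)"
    by (simp add: power2_norm_eq_inner algebra_simps)
  also have "\<dots> \<le> (L - \<mu>) * (C\<^sup>2 - (norm z')\<^sup>2)"
  proof -
    have "S \<le> (\<Sum>i\<in>I. c i * C\<^sup>2)"
      unfolding S_def using assms(1,5)
      by (intro sum_mono mult_left_mono power_mono) auto
    with assms(2,8) show ?thesis
      by (simp add: mult_left_mono flip: sum_distrib_right)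
  qed
  finally have "\<mu> * (norm (m - z'))\<^sup>2 \<le> (L - \<mu>) * (C\<^sup>2 - (norm z')\<^sup>2)" .
  moreover have "norm z' \<le> C"
  proof -
    have "norm z' \<le> (\<Sum>i\<in>I. norm (c i *\<^sub>R z i))"
      unfolding z'_def by (rule norm_sum)
    also have "\<dots> \<le> (\<Sum>i\<in>I. c i * C)"
      using assms(1,5) by (intro sum_mono) (simp add: mult_left_mono)
    finally show ?thesis
      using assms(2) by (simp flip: sum_distrib_right)
  qed
  ultimately show ?thesis
    using norm_sq_le_if_dist_sq_le[OF assms(7,8)] by blast
qed

section \<open>Discount weights\<close>

definition discount_weight :: "real \<Rightarrow> nat \<Rightarrow> nat \<Rightarrow> real" where
  "discount_weight \<gamma> t i = (1 - \<gamma>) / (1 - \<gamma> ^ t) * \<gamma> ^ (t - i)"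

lemma Fdisc_eq: "Fdisc \<gamma> f t = (\<lambda>w. \<Sum>i=1..t. discount_weight \<gamma> t i * f i w)"
  by (simp add: fun_eq_iff Fdisc_def discount_weight_def)

lemma gradF_eq: "gradF \<gamma> g t = (\<lambda>w. \<Sum>i=1..t. discount_weight \<gamma> t i *\<^sub>R g i w)"
  by (simp add: fun_eq_iff gradF_def discount_weight_def)

lemma discount_weight_nonneg:
  assumes "0 \<le> \<gamma>" "\<gamma> < 1"
  shows "0 \<le> discount_weight \<gamma> t i"
  using assms by (simp add: discount_weight_def power_le_one)

lemma sum_discount_weight:
  assumes "0 \<le> \<gamma>" "\<gamma> < 1" "1 \<le> t"
  shows "(\<Sum>i=1..t. discount_weight \<gamma> t i) = 1"
proof -
  have "(\<Sum>i=1..t. \<gamma> ^ (t - i)) = (\<Sum>j<t. \<gamma> ^ j)"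
    by (rule sum.reindex_bij_witness[of _ "\<lambda>j. t - j" "\<lambda>i. t - i"]) auto
  then have geometric: "1 - \<gamma> ^ t = (1 - \<gamma>) * (\<Sum>i=1..t. \<gamma> ^ (t - i))"
    by (simp add: one_diff_power_eq)
  moreover have "\<gamma> ^ t < 1"
    using assms by (simp add: power_less_one_iff)
  ultimately have nonzero: "(1 - \<gamma>) * (\<Sum>i=1..t. \<gamma> ^ (t - i)) \<noteq> 0"
    by linarith
  have "(\<Sum>i=1..t. discount_weight \<gamma> t i) = (1 - \<gamma>) / (1 - \<gamma> ^ t) * (\<Sum>i=1..t. \<gamma> ^ (t - i))"
    by (simp add: discount_weight_def sum_distrib_left)
  also have "\<dots> = 1"
    unfolding geometric using nonzero by simp
  finally show ?thesis .
qed

lemma discount_weight_Suc: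
  assumes "0 \<le> \<gamma>" "\<gamma> < 1" "1 \<le> i" "i \<le> t"
  shows "discount_weight \<gamma> (Suc t) i = \<gamma> * (1 - \<gamma> ^ t) / (1 - \<gamma> ^ Suc t) * discount_weight \<gamma> t i"
proof -
  define a where "a = 1 - \<gamma> ^ t"
  define b where "b = 1 - \<gamma> ^ Suc t"
  have "\<gamma> ^ t < 1"
    using assms by (simp add: power_less_one_iff)
  then have "a \<noteq> 0"
    by (simp add: a_def)
  moreover have "\<gamma> ^ (Suc t - i) = \<gamma> * \<gamma> ^ (t - i)"
    using assms(4) by (simp add: Suc_diff_le)
  ultimately show ?thesis
    unfolding discount_weight_def a_def [symmetric] b_def [symmetric]
    by (cases "b = 0") (simp_all add: field_simps)
qed

lemma gradF_Suc:
  assumes "0 \<le> \<gamma>" "\<gamma> < 1"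
  shows "gradF \<gamma> g (Suc t) x = (\<gamma> * (1 - \<gamma> ^ t) / (1 - \<gamma> ^ Suc t)) *\<^sub>R gradF \<gamma> g t x
    + ((1 - \<gamma>) / (1 - \<gamma> ^ Suc t)) *\<^sub>R g (Suc t) x"
proof -
  have "gradF \<gamma> g (Suc t) x = (\<Sum>i=1..t. discount_weight \<gamma> (Suc t) i *\<^sub>R g i x)
      + discount_weight \<gamma> (Suc t) (Suc t) *\<^sub>R g (Suc t) x"
    by (simp add: gradF_eq)
  also have "(\<Sum>i=1..t. discount_weight \<gamma> (Suc t) i *\<^sub>R g i x)
      = (\<gamma> * (1 - \<gamma> ^ t) / (1 - \<gamma> ^ Suc t)) *\<^sub>R gradF \<gamma> g t x"
    unfolding gradF_eq scaleR_sum_right scaleR_scaleR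
    by (intro sum.cong refl) (auto simp: discount_weight_Suc[OF assms] simp del: power_Suc)
  also have "discount_weight \<gamma> (Suc t) (Suc t) = (1 - \<gamma>) / (1 - \<gamma> ^ Suc t)"
    by (simp add: discount_weight_def del: power_Suc)
  finally show ?thesis .
qed

section \<open>Contractive recursions\<close>

lemma contractive_recursion_bound:
  fixes e :: "nat \<Rightarrow> real"
  assumes "0 \<le> \<rho>" "\<rho> < 1" and rec: "\<And>t. N \<le> t \<Longrightarrow> e (Suc t) \<le> \<rho> * (e t + B)"
  shows "e (N + k) - \<rho> * B / (1 - \<rho>) \<le> \<rho> ^ k * (e N - \<rho> * B / (1 - \<rho>))"
proof (induction k)
  case 0
  show ?case by simp
next
  case (Suc k)
  define c where "c = \<rho> * B / (1 - \<rho>)"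
  have fixpoint: "\<rho> * (c + B) = c"
    using assms(2) by (simp add: c_def field_simps)
  have "e (N + Suc k) - c \<le> \<rho> * (e (N + k) + B) - \<rho> * (c + B)"
    using rec[of "N + k"] fixpoint by simp
  also have "\<dots> = \<rho> * (e (N + k) - c)"
    by (simp add: algebra_simps)
  also have "\<dots> \<le> \<rho> * (\<rho> ^ k * (e N - c))"
    using Suc.IH assms(1) by (simp add: c_def mult_left_mono)
  finally show ?case
    by (simp add: c_def)
qed

lemma limsup_contractive_recursion_le:
  fixes e :: "nat \<Rightarrow> real"
  assumes "0 \<le> \<rho>" "\<rho> < 1" and "\<And>t. N \<le> t \<Longrightarrow> e (Suc t) \<le> \<rho> * (e t + B)"
  shows "limsup (\<lambda>t. ereal (e t)) \<le> ereal (\<rho> * B / (1 - \<rho>))"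
proof -
  define c where "c = \<rho> * B / (1 - \<rho>)"
  have "(\<lambda>k. c + \<rho> ^ k * (e N - c)) \<longlonglongrightarrow> c + 0 * (e N - c)"
    using assms(1,2) by (intro tendsto_intros LIMSEQ_power_zero) auto
  then have "limsup (\<lambda>k. ereal (c + \<rho> ^ k * (e N - c))) = ereal c"
    by (intro lim_imp_Limsup) (simp_all add: lim_ereal)
  moreover have "limsup (\<lambda>k. ereal (e (k + N))) \<le> limsup (\<lambda>k. ereal (c + \<rho> ^ k * (e N - c)))"
    using contractive_recursion_bound[where e = e and N = N and B = B, OF assms] unfolding c_def
    by (intro Limsup_mono always_eventually) (simp add: add.commute algebra_simps)
  ultimately show ?thesis
    using limsup_shift_k[of "\<lambda>t. ereal (e t)" N] by (simp add: c_def)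
qed

lemma limsup_recursion_le:
  fixes e d :: "nat \<Rightarrow> real"
  assumes "0 \<le> \<rho>" "\<rho> < 1" and rec: "\<And>t. e (Suc t) \<le> \<rho> * (e t + d t)"
    and drift: "limsup (\<lambda>t. ereal (d t)) \<le> ereal K"
  shows "limsup (\<lambda>t. ereal (e t)) \<le> ereal (\<rho> * K / (1 - \<rho>))"
proof (rule ereal_le_epsilon2)
  fix \<delta> :: real
  assume "0 < \<delta>"
  define B where "B = K + \<delta> * (1 - \<rho>)"
  have "K < B"
    using \<open>0 < \<delta>\<close> assms(2) by (simp add: B_def)
  with drift have "limsup (\<lambda>t. ereal (d t)) < ereal B"
    by (simp add: order.strict_trans1)
  then have "eventually (\<lambda>t. ereal (d t) < ereal B) sequentially"
    by (rule Limsup_lessD)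
  then obtain N where N: "\<And>t. N \<le> t \<Longrightarrow> d t < B"
    unfolding eventually_sequentially by auto
  have "e (Suc t) \<le> \<rho> * (e t + B)" if "N \<le> t" for t
  proof -
    have "\<rho> * (e t + d t) \<le> \<rho> * (e t + B)"
      using N[OF that] assms(1) by (intro mult_left_mono) auto
    with rec[of t] show ?thesis
      by linarith
  qed
  then have "limsup (\<lambda>t. ereal (e t)) \<le> ereal (\<rho> * B / (1 - \<rho>))"
    by (rule limsup_contractive_recursion_le[OF assms(1,2)])
  also have "\<rho> * B / (1 - \<rho>) = \<rho> * K / (1 - \<rho>) + \<rho> * \<delta>"
    using assms(2) by (simp add: B_def field_simps)
  also have "\<dots> \<le> \<rho> * K / (1 - \<rho>) + \<delta>"
    using assms(1,2) \<open>0 < \<delta>\<close> by (simp add: mult_left_le_one_le)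
  finally show "limsup (\<lambda>t. ereal (e t)) \<le> ereal (\<rho> * K / (1 - \<rho>)) + ereal \<delta>"
    by simp
qed

lemma contraction_gain_le:
  fixes q K \<epsilon> :: real
  assumes "0 < q" "q < 1" "0 \<le> K" "0 < \<epsilon>" and E: "ln (\<epsilon> / (K + \<epsilon>)) / ln q \<le> real E"
  shows "q ^ E * K / (1 - q ^ E) \<le> \<epsilon>"
proof -
  have "ln q < 0"
    using assms(1,2) by simp
  with E have "ln (q ^ E) \<le> ln (\<epsilon> / (K + \<epsilon>))"
    using assms(1) by (simp add: ln_realpow divide_le_eq mult.commute)
  then have "q ^ E \<le> \<epsilon> / (K + \<epsilon>)"
    using assms by simp
  then have gain: "q ^ E * K \<le> \<epsilon> * (1 - q ^ E)"
    using assms(3,4) by (simp add: field_simps)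
  show ?thesis
  proof (cases "q ^ E < 1")
    case True
    with gain show ?thesis
      by (simp add: divide_le_eq mult.commute)
  next
    case False
    moreover have "q ^ E \<le> 1"
      using assms(1,2) by (simp add: power_le_one)
    ultimately have "1 - q ^ E = 0"
      by simp
    with assms(4) show ?thesis
      by simp
  qed
qed

lemma ln_ratio_bigo_ln_inverse:
  fixes K c :: real
  assumes "0 < K"
  shows "(\<lambda>e. ln (e / (K + e)) / c) \<in> O[at_right 0](\<lambda>e. ln (1 / e))"
proof -
  have "(\<lambda>e. ln (e / (K + e))) \<in> O[at_right 0](\<lambda>e. ln (1 / e))"
    using assms by real_asymp
  then show ?thesis
    by (simp add: divide_inverse landau_o.big.mult_right)
qed

section \<open>Tracking the minimizer of the discounted objective\<close>

locale discounted_tracking =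
  fixes f :: "nat \<Rightarrow> 'a::euclidean_space \<Rightarrow> real" and g :: "nat \<Rightarrow> 'a \<Rightarrow> 'a"
    and \<mu> L C \<gamma> :: real
  assumes mu_pos: "0 < \<mu>" and mu_le_L: "\<mu> \<le> L"
    and gamma_nonneg: "0 \<le> \<gamma>" and gamma_less_1: "\<gamma> < 1"
    and grad: "\<And>t x. 1 \<le> t \<Longrightarrow> (f t has_derivative (\<lambda>h. inner (g t x) h)) (at x)"
    and smooth: "\<And>t. 1 \<le> t \<Longrightarrow> smooth_grad L (g t)"
    and strongly_convex: "\<And>t. 1 \<le> t \<Longrightarrow> strongly_convex_grad \<mu> (f t) (g t)"
    and minimizer_norm: "\<And>t w. 1 \<le> t \<Longrightarrow> (\<forall>v. f t w \<le> f t v) \<Longrightarrow> norm w \<le> C"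
begin

abbreviation wbar :: "nat \<Rightarrow> 'a" where
  "wbar t \<equiv> argmin (Fdisc \<gamma> f t)"

lemma quadratic_bounds_f: "1 \<le> t \<Longrightarrow> quadratic_bounds \<mu> L (f t) (g t)"
  by (intro quadratic_bounds_if_smooth_strongly_convex grad smooth strongly_convex)

lemma quadratic_bounds_Fdisc: "1 \<le> t \<Longrightarrow> quadratic_bounds \<mu> L (Fdisc \<gamma> f t) (gradF \<gamma> g t)"
  unfolding Fdisc_eq gradF_eq
  by (intro quadratic_bounds_convex_combination quadratic_bounds_f discount_weight_nonneg
      sum_discount_weight gamma_nonneg gamma_less_1) auto

lemma gradF_wbar: "1 \<le> t \<Longrightarrow> gradF \<gamma> g t (wbar t) = 0"
  using quadratic_bounds_zero_exists quadratic_bounds_argmin quadratic_bounds_Fdisc mu_pos mu_le_L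
  by metis

lemma zero_of_g_bounded:
  assumes "1 \<le> t"
  shows "\<exists>z. g t z = 0 \<and> norm z \<le> C"
proof -
  obtain z where "g t z = 0"
    using quadratic_bounds_zero_exists[OF quadratic_bounds_f[OF assms] mu_pos mu_le_L] by blast
  moreover have "norm z \<le> C"
    using quadratic_bounds_min_at_zero[OF quadratic_bounds_f[OF assms]] mu_pos \<open>g t z = 0\<close>
    by (intro minimizer_norm[OF assms]) auto
  ultimately show ?thesis
    by blast
qed

lemma norm_wbar_le:
  assumes "1 \<le> t"
  shows "norm (wbar t) \<le> sqrt (L / \<mu>) * C"
proof -
  have "\<forall>i. \<exists>z. 1 \<le> i \<longrightarrow> g i z = 0 \<and> norm z \<le> C"
    using zero_of_g_bounded by blast
  then obtain z where z: "\<And>i. 1 \<le> i \<Longrightarrow> g i (z i) = 0 \<and> norm (z i) \<le> C"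
    by metis
  have "\<mu> * (norm (wbar t))\<^sup>2 \<le> L * C\<^sup>2"
  proof (rule convex_combination_minimizer_norm[where f = f and g = g and z = z])
    show "(\<Sum>i=1..t. discount_weight \<gamma> t i * f i (wbar t)) \<le> (\<Sum>i=1..t. discount_weight \<gamma> t i * f i v)" for v
      using quadratic_bounds_min_at_zero[OF quadratic_bounds_Fdisc[OF assms] _ gradF_wbar[OF assms]] mu_pos
      by (simp add: Fdisc_eq)
    show "\<And>i. i \<in> {1..t} \<Longrightarrow> 0 \<le> discount_weight \<gamma> t i"
      using discount_weight_nonneg gamma_nonneg gamma_less_1 by blast
    show "(\<Sum>i=1..t. discount_weight \<gamma> t i) = 1"
      using sum_discount_weight gamma_nonneg gamma_less_1 assms by blast
    show "\<And>i. i \<in> {1..t} \<Longrightarrow> quadratic_bounds \<mu> L (f i) (g i)"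
      using quadratic_bounds_f by simp
    show "\<And>i. i \<in> {1..t} \<Longrightarrow> g i (z i) = 0" "\<And>i. i \<in> {1..t} \<Longrightarrow> norm (z i) \<le> C"
      using z by auto
  qed (use mu_pos mu_le_L in auto)
  then have "(norm (wbar t))\<^sup>2 \<le> L / \<mu> * C\<^sup>2"
    using mu_pos by (simp add: field_simps)
  also have "\<dots> = (sqrt (L / \<mu>) * C)\<^sup>2"
    using mu_pos mu_le_L by (simp add: power_mult_distrib)
  finally have "(norm (wbar t))\<^sup>2 \<le> (sqrt (L / \<mu>) * C)\<^sup>2" .
  moreover have "0 \<le> C"
    using norm_ge_zero[of "z 1"] z[of 1] by linarith
  then have "0 \<le> sqrt (L / \<mu>) * C"
    using mu_pos mu_le_L by simp
  ultimately show ?thesis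
    by (rule power2_le_imp_le)
qed

lemma wbar_drift:
  assumes "1 \<le> t"
  shows "norm (wbar t - wbar (Suc t))
    \<le> (1 - \<gamma>) / (1 - \<gamma> ^ Suc t) * ((1 + sqrt (L / \<mu>)) * (L * C / \<mu>))"
proof -
  define \<alpha> where "\<alpha> = (1 - \<gamma>) / (1 - \<gamma> ^ Suc t)"
  have "\<gamma> ^ Suc t \<le> 1"
    using gamma_nonneg gamma_less_1 by (intro power_le_one) auto
  then have "0 \<le> \<alpha>"
    using gamma_less_1 by (simp add: \<alpha>_def del: power_Suc)
  obtain z where z: "g (Suc t) z = 0" "norm z \<le> C"
    using zero_of_g_bounded[of "Suc t"] by auto
  have "gradF \<gamma> g (Suc t) (wbar t) = \<alpha> *\<^sub>R g (Suc t) (wbar t)"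
    unfolding gradF_Suc[OF gamma_nonneg gamma_less_1, of g t] gradF_wbar[OF assms] \<alpha>_def
    by simp
  then have "\<mu> * norm (wbar t - wbar (Suc t)) \<le> \<alpha> * norm (g (Suc t) (wbar t))"
    using quadratic_bounds_grad_diff_ge[OF quadratic_bounds_Fdisc, of "Suc t" "wbar (Suc t)" "wbar t"]
      gradF_wbar[of "Suc t"] \<open>0 \<le> \<alpha>\<close> by (simp add: norm_minus_commute)
  also have "\<dots> \<le> \<alpha> * (L * (sqrt (L / \<mu>) * C + C))"
  proof (rule mult_left_mono[OF _ \<open>0 \<le> \<alpha>\<close>])
    have "norm (g (Suc t) (wbar t)) = norm (g (Suc t) (wbar t) - g (Suc t) z)"
      using z by simp
    also have "\<dots> \<le> L * norm (wbar t - z)"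
      using smooth[of "Suc t"] unfolding smooth_grad_def by simp
    also have "\<dots> \<le> L * (sqrt (L / \<mu>) * C + C)"
      using norm_triangle_ineq4[of "wbar t" z] norm_wbar_le[OF assms] z(2) mu_pos mu_le_L
      by (intro mult_left_mono) auto
    finally show "norm (g (Suc t) (wbar t)) \<le> L * (sqrt (L / \<mu>) * C + C)" .
  qed
  finally have "norm (wbar t - wbar (Suc t)) \<le> \<alpha> * (L * (sqrt (L / \<mu>) * C + C)) / \<mu>"
    using mu_pos by (simp add: pos_le_divide_eq mult.commute)
  also have "\<dots> = \<alpha> * ((1 + sqrt (L / \<mu>)) * (L * C / \<mu>))"
    by (simp add: algebra_simps add_divide_distrib)
  finally show ?thesis
    unfolding \<alpha>_def .
qed

lemma limsup_wbar_drift_le: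
  "limsup (\<lambda>t. ereal (norm (wbar t - wbar (Suc t))))
    \<le> ereal ((1 - \<gamma>) * ((1 + sqrt (L / \<mu>)) * (L * C / \<mu>)))"
proof -
  define C' where "C' = (1 + sqrt (L / \<mu>)) * (L * C / \<mu>)"
  have "(\<lambda>t. (1 - \<gamma>) / (1 - \<gamma> ^ Suc t) * C') \<longlonglongrightarrow> (1 - \<gamma>) / (1 - 0) * C'"
    using gamma_nonneg gamma_less_1 by (intro tendsto_intros LIMSEQ_Suc[OF LIMSEQ_power_zero]) auto
  then have "limsup (\<lambda>t. ereal ((1 - \<gamma>) / (1 - \<gamma> ^ Suc t) * C')) = ereal ((1 - \<gamma>) * C')"
    by (intro lim_imp_Limsup) (simp_all add: lim_ereal)
  moreover have "limsup (\<lambda>t. ereal (norm (wbar t - wbar (Suc t))))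
      \<le> limsup (\<lambda>t. ereal ((1 - \<gamma>) / (1 - \<gamma> ^ Suc t) * C'))"
    using wbar_drift by (intro Limsup_mono eventually_sequentiallyI[of 1]) (simp add: C'_def)
  ultimately show ?thesis
    by (simp add: C'_def)
qed

lemma tracking_error_Suc:
  assumes "0 < \<eta>" "\<eta> \<le> 2 / (\<mu> + L)"
  shows "norm (iter_w \<gamma> g \<eta> E w0 (Suc t) - wbar (Suc t))
    \<le> (1 - \<eta> * \<mu>) ^ E * (norm (iter_w \<gamma> g \<eta> E w0 t - wbar t) + norm (wbar t - wbar (Suc t)))"
proof -
  have "norm (iter_w \<gamma> g \<eta> E w0 (Suc t) - wbar (Suc t))
      \<le> (1 - \<eta> * \<mu>) ^ E * norm (iter_w \<gamma> g \<eta> E w0 t - wbar (Suc t))"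
    unfolding iter_w.simps
    by (rule gradient_steps_contraction[OF quadratic_bounds_Fdisc mu_pos mu_le_L assms gradF_wbar]) simp_all
  also have "\<dots> \<le> (1 - \<eta> * \<mu>) ^ E
      * (norm (iter_w \<gamma> g \<eta> E w0 t - wbar t) + norm (wbar t - wbar (Suc t)))"
    using step_size_le[OF mu_pos mu_le_L assms]
      norm_triangle_ineq[of "iter_w \<gamma> g \<eta> E w0 t - wbar t" "wbar t - wbar (Suc t)"]
    by (intro mult_left_mono) simp_all
  finally show ?thesis .
qed

end

theorem proposition3:
  fixes f :: "nat \<Rightarrow> 'a::euclidean_space \<Rightarrow> real"
    and g :: "nat \<Rightarrow> 'a \<Rightarrow> 'a"
    and \<mu> L C \<gamma> \<eta> \<epsilon> :: real and E :: nat and w0 :: 'a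
  assumes "0 < \<mu>" "\<mu> \<le> L" "C > 0" "0 < \<gamma>" "\<gamma> < 1"
    and grad: "\<And>t x. t \<ge> 1 \<Longrightarrow> (f t has_derivative (\<lambda>h. inner (g t x) h)) (at x)"
    and smooth: "\<And>t. t \<ge> 1 \<Longrightarrow> smooth_grad L (g t)"
    and sconv: "\<And>t. t \<ge> 1 \<Longrightarrow> strongly_convex_grad \<mu> (f t) (g t)"
    and minbd: "\<And>t w. t \<ge> 1 \<Longrightarrow> (\<forall>v. f t w \<le> f t v) \<Longrightarrow> norm w \<le> C"
    and "0 < \<eta>" "\<eta> \<le> 2 / (\<mu> + L)" "\<eta> * \<mu> < 1"
    and "E \<ge> 1"
    and "\<epsilon> > 0"
    and Ebd: "real E \<ge> ln (\<epsilon> / ((1 + sqrt (L / \<mu>)) * (L * C / \<mu>) * (1 - \<gamma>) + \<epsilon>))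
                        / ln (1 - \<eta> * \<mu>)"
  shows "(limsup (\<lambda>t. ereal (norm (iter_w \<gamma> g \<eta> E w0 t - argmin (Fdisc \<gamma> f t))))
           \<le> ereal \<epsilon>) \<and>
         ((\<lambda>e. ln (e / ((1 + sqrt (L / \<mu>)) * (L * C / \<mu>) * (1 - \<gamma>) + e)) / ln (1 - \<eta> * \<mu>))
           \<in> bigo (at_right (0::real)) (\<lambda>e. ln (1 / e)))"
proof -
  interpret discounted_tracking f g \<mu> L C \<gamma>
    using assms by unfold_locales auto
  let ?K = "(1 - \<gamma>) * ((1 + sqrt (L / \<mu>)) * (L * C / \<mu>))"
  let ?\<rho> = "(1 - \<eta> * \<mu>) ^ E"
  have "0 < ?K"
    using assms(1-5) by (simp add: add_pos_nonneg)
  have \<rho>: "0 \<le> ?\<rho>" "?\<rho> < 1"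
    using assms(1,10,12,13) by (simp_all add: power_less_one_iff)
  have "limsup (\<lambda>t. ereal (norm (iter_w \<gamma> g \<eta> E w0 t - wbar t))) \<le> ereal (?\<rho> * ?K / (1 - ?\<rho>))"
    by (rule limsup_recursion_le[OF \<rho> tracking_error_Suc[OF assms(10,11)] limsup_wbar_drift_le])
  also have "?\<rho> * ?K / (1 - ?\<rho>) \<le> \<epsilon>"
    using assms(1,10,12,14) Ebd \<open>0 < ?K\<close>
    by (intro contraction_gain_le) (simp_all add: mult.commute)
  finally show ?thesis
    using ln_ratio_bigo_ln_inverse[OF \<open>0 < ?K\<close>] by (simp add: mult.commute)
qed

end
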